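(* Let $\{s_k\}_{k\ge0}$ be a strictly positive sequence and let $(L,\omega,\upsilon)$ be the corresponding Krein--Langer string with coefficients $l_j,\omega_j,\upsilon_j$ ($j\ge0$) given by $l_j = \frac{\Delta_{1,k(j)}^2}{\Delta_{0,k(j)-1}\Delta_{0,k(j)}}$; $\omega_j=\frac{\Delta_{0,k(j)}^2}{\Delta_{1,k(j)}\Delta_{1,k(j)+1}}$, $\upsilon_j=0$ if $k(j+1)-k(j)=1$; $\omega_j=\frac{\Delta_{-1,k(j)}}{\Delta_{1,k(j)}}-\frac{\Delta_{-1,k(j+1)}}{\Delta_{1,k(j+1)}}$, $\upsilon_j=\frac{\Delta_{-1,k(j)+1}^2}{\Delta_{0,k(j)}\Delta_{0,k(j)+1}}$ if $k(j+1)-k(j)=2$. Let $\{P_n\}_{n\ge0}$ and $\{Q_n\}_{n\ge0}$ be the associated polynomials of the first and second kind. Then for all $j\ge0$, $$l_j=|P_{k(j)}(0)|^2,\qquad \omega_j=\frac{Q_{k(j)}(0)}{P_{k(j)}(0)}-\frac{Q_{k(j+1)}(0)}{P_{k(j+1)}(0)},$$ and $$\upsilon_j=\begin{cases}0,& k(j+1)-k(j)=1,\\ |Q_{k(j)+1}(0)|^2,& k(j+1)-k(j)=2.\end{cases}$$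
   Context: A real sequence $\{s_k\}_{k\ge0}$ is strictly positive if $\Delta_{0,n}:=\det(s_{i+j})_{i,j=0}^{n}>0$ for all $n\ge0$; $\Delta_{0,-1}:=1$. $\Delta_{1,0}:=1$, $\Delta_{1,n}:=\det(s_{i+j+1})_{i,j=0}^{n-1}$ ($n\ge1$); $\Delta_{-1,0}:=0$, $\Delta_{-1,n}:=\det(s_{i+j-1})_{i,j=0}^{n}$ with $s_{-1}:=0$ ($n\ge1$). For $j\ge0$, $k(j)$ is the largest integer $k\ge0$ such that exactly $j$ of $\Delta_{1,0},\dots,\Delta_{1,k-1}$ are nonzero. Polynomials of the first kind: $P_0:=1/\sqrt{s_0}$ and, for $n\ge1$, $P_n(z):=\frac{1}{\sqrt{\Delta_{0,n-1}\Delta_{0,n}}}\det M_n(z)$, where $M_n(z)$ is the $(n+1)\times(n+1)$ matrix whose first $n$ rows are $(s_i,s_{i+1},\dots,s_{i+n})$, $i=0,\dots,n-1$, and whose last row is $(1,z,\dots,z^n)$. Polynomials of the second kind: $Q_0:=0$ and $Q_n(z):=\int_{\mathbb R}\frac{P_n(\lambda)-P_n(z)}{\lambda-z}\rho(d\lambda)$ for $n\ge1$, where $\rho$ is any positive Borel measure on $\mathbb R$ with $\int\lambda^k\rho(d\lambda)=s_k$ for all $k$ (this does not depend on the choice of $\rho$). *)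

theory Defs
  imports "HOL-Analysis.Analysis" "Jordan_Normal_Form.Determinant"
begin

text \<open>Hankel determinants. Delta0 s n = Delta_{0,n} for n >= -1 (Delta_{0,-1} = 1).\<close>
definition Delta0 :: "(nat \<Rightarrow> real) \<Rightarrow> int \<Rightarrow> real" where
  "Delta0 s n = (if n = -1 then 1
     else Determinant.det (Matrix.mat (nat n + 1) (nat n + 1) (\<lambda>(i,j). s (i + j))))"

definition Delta1 :: "(nat \<Rightarrow> real) \<Rightarrow> nat \<Rightarrow> real" where
  "Delta1 s n = (if n = 0 then 1
     else Determinant.det (Matrix.mat n n (\<lambda>(i,j). s (i + j + 1))))"

text \<open>Delta_{-1,n}, with the convention s_{-1} = 0.\<close>
definition Deltam1 :: "(nat \<Rightarrow> real) \<Rightarrow> nat \<Rightarrow> real" where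
  "Deltam1 s n = (if n = 0 then 0
     else Determinant.det (Matrix.mat (n + 1) (n + 1)
            (\<lambda>(i,j). if i + j = 0 then 0 else s (i + j - 1))))"

definition strictly_positive :: "(nat \<Rightarrow> real) \<Rightarrow> bool" where
  "strictly_positive s \<longleftrightarrow> (\<forall>n::nat. Delta0 s (int n) > 0)"

definition kidx :: "(nat \<Rightarrow> real) \<Rightarrow> nat \<Rightarrow> nat" where
  "kidx s j = (GREATEST k. card {i. i < k \<and> Delta1 s i \<noteq> 0} = j)"

definition Ppoly :: "(nat \<Rightarrow> real) \<Rightarrow> nat \<Rightarrow> real poly" where
  "Ppoly s n = (if n = 0 then [: 1 / sqrt (s 0) :]
     else Polynomial.smult (1 / sqrt (Delta0 s (int n - 1) * Delta0 s (int n)))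
       (Determinant.det (Matrix.mat (n + 1) (n + 1)
          (\<lambda>(i,j). if i < n then [: s (i + j) :] else monom 1 j))))"

definition Pfun :: "(nat \<Rightarrow> real) \<Rightarrow> nat \<Rightarrow> real \<Rightarrow> real" where
  "Pfun s n z = poly (Ppoly s n) z"

definition divdiff :: "real poly \<Rightarrow> real \<Rightarrow> real \<Rightarrow> real" where
  "divdiff p z x = (if x = z then poly (pderiv p) z else (poly p x - poly p z) / (x - z))"

definition moment_measure :: "(nat \<Rightarrow> real) \<Rightarrow> real measure \<Rightarrow> bool" where
  "moment_measure s \<rho> \<longleftrightarrow> sets \<rho> = sets borel \<and>
     (\<forall>k. integrable \<rho> (\<lambda>x. x ^ k) \<and> (\<integral>x. x ^ k \<partial>\<rho>) = s k)"

definition Qfun :: "(nat \<Rightarrow> real) \<Rightarrow> real measure \<Rightarrow> nat \<Rightarrow> real \<Rightarrow> real" where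
  "Qfun s \<rho> n z = (if n = 0 then 0 else (\<integral>x. divdiff (Ppoly s n) z x \<partial>\<rho>))"

definition lcoef :: "(nat \<Rightarrow> real) \<Rightarrow> nat \<Rightarrow> real" where
  "lcoef s j = (Delta1 s (kidx s j))\<^sup>2 /
      (Delta0 s (int (kidx s j) - 1) * Delta0 s (int (kidx s j)))"

definition omegacoef :: "(nat \<Rightarrow> real) \<Rightarrow> nat \<Rightarrow> real" where
  "omegacoef s j = (let k = kidx s j; k' = kidx s (Suc j) in
     if k' - k = 1 then (Delta0 s (int k))\<^sup>2 / (Delta1 s k * Delta1 s (k + 1))
     else if k' - k = 2 then Deltam1 s k / Delta1 s k - Deltam1 s k' / Delta1 s k'
     else undefined)"

definition upsiloncoef :: "(nat \<Rightarrow> real) \<Rightarrow> nat \<Rightarrow> real" where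
  "upsiloncoef s j = (let k = kidx s j; k' = kidx s (Suc j) in
     if k' - k = 1 then 0
     else if k' - k = 2 then (Deltam1 s (k + 1))\<^sup>2 / (Delta0 s (int k) * Delta0 s (int k + 1))
     else undefined)"

end

theory Submission
  imports Defs "Jordan_Normal_Form.Char_Poly" "Jordan_Normal_Form.Column_Operations"
begin

text \<open>Expanding the determinant that defines P_n along its last row (1, z, ..., z^n) shows
  that P_n(0) is (-1)^n Delta_{1,n} times the normalising factor (Delta_{0,n-1} Delta_{0,n})^{-1/2}.
  Integrating the divided difference (P_n(x) - P_n(0))/x against the moments replaces that last
  row by (0, s_0, ..., s_{n-1}), so Q_n(0) is the same factor times (-1)^n Delta_{-1,n}. This gives
  l_j and upsilon_j, and Q_n(0)/P_n(0) = Delta_{-1,n}/Delta_{1,n}.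
  The Desnanot--Jacobi identity for the Hankel matrix of Delta_{-1,n+1} reads
  Delta_{-1,n+1} Delta_{1,n} = Delta_{1,n+1} Delta_{-1,n} - Delta_{0,n}^2. As Delta_{0,n} > 0, no two
  consecutive Delta_{1,n} vanish, so k(j+1) - k(j) is 1 or 2; and when it is 1, the identity turns
  the first formula for omega_j into the difference of the two ratios.\<close>

section \<open>The Desnanot--Jacobi identity\<close>

lemma det_eq_entry_mult_cofactor_col:
  fixes A :: "'a :: comm_ring_1 mat"
  assumes A: "A \<in> carrier_mat n n" and "j < n" "k < n"
    and zero: "\<And>i. i < n \<Longrightarrow> i \<noteq> k \<Longrightarrow> A $$ (i,j) = 0"
  shows "det A = A $$ (k,j) * cofactor A k j"
proof -
  have "det A = (\<Sum>i<n. A $$ (i,j) * cofactor A i j)"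
    by (rule laplace_expansion_column[OF A \<open>j < n\<close>])
  also have "\<dots> = (\<Sum>i\<in>{k}. A $$ (i,j) * cofactor A i j)"
    using \<open>k < n\<close> zero by (intro sum.mono_neutral_right) auto
  finally show ?thesis by simp
qed

lemma det_eq_entry_mult_cofactor_row:
  fixes A :: "'a :: comm_ring_1 mat"
  assumes A: "A \<in> carrier_mat n n" and "i < n" "k < n"
    and zero: "\<And>j. j < n \<Longrightarrow> j \<noteq> k \<Longrightarrow> A $$ (i,j) = 0"
  shows "det A = A $$ (i,k) * cofactor A i k"
proof -
  have "det A = (\<Sum>j<n. A $$ (i,j) * cofactor A i j)"
    by (rule laplace_expansion_row[OF A \<open>i < n\<close>])
  also have "\<dots> = (\<Sum>j\<in>{k}. A $$ (i,j) * cofactor A i j)"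
    using \<open>k < n\<close> zero by (intro sum.mono_neutral_right) auto
  finally show ?thesis by simp
qed

lemma det_zero_col:
  fixes A :: "'a :: comm_ring_1 mat"
  assumes "A \<in> carrier_mat n n" and "j < n" and "\<And>i. i < n \<Longrightarrow> A $$ (i,j) = 0"
  shows "det A = 0"
  using laplace_expansion_column[OF assms(1,2)] assms(3) by simp

lemma det_two_unit_cols:
  fixes W :: "'a :: comm_ring_1 mat"
  assumes W: "W \<in> carrier_mat (Suc (Suc n)) (Suc (Suc n))"
    and col_0: "\<And>i. 0 < i \<Longrightarrow> i < Suc (Suc n) \<Longrightarrow> W $$ (i,0) = 0"
    and col_last: "\<And>i. i < Suc n \<Longrightarrow> W $$ (i, Suc n) = 0"
  shows "det W = W $$ (0,0) * W $$ (Suc n, Suc n) * det (mat_delete (mat_delete W 0 0) n n)"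
proof -
  define V where "V = mat_delete W 0 0"
  have V: "V \<in> carrier_mat (Suc n) (Suc n)" using mat_delete_carrier[OF W] by (simp add: V_def)
  have V_entry: "V $$ (i,j) = W $$ (Suc i, Suc j)" if "i < Suc n" "j < Suc n" for i j
    using that W by (simp add: V_def mat_delete_def)
  have "det W = W $$ (0,0) * det V"
    using det_eq_entry_mult_cofactor_col[OF W, of 0 0] col_0 by (simp add: cofactor_def V_def)
  also have "det V = W $$ (Suc n, Suc n) * det (mat_delete V n n)"
    using det_eq_entry_mult_cofactor_col[OF V, of n n] col_last
    by (simp add: cofactor_def V_entry)
  finally show ?thesis by (simp add: V_def)
qed

lemma det_identity_but_two_cols:
  fixes X :: "'a :: comm_ring_1 mat"
  assumes X: "X \<in> carrier_mat (Suc (Suc n)) (Suc (Suc n))"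
    and unit: "\<And>i j. i < Suc (Suc n) \<Longrightarrow> 0 < j \<Longrightarrow> j < Suc n \<Longrightarrow>
      X $$ (i,j) = (if i = j then 1 else 0)"
  shows "det X = X $$ (0,0) * X $$ (Suc n, Suc n) - X $$ (Suc n, 0) * X $$ (0, Suc n)"
proof -
  define m where "m = Suc n"
  have minor_0: "det (mat_delete X 0 0) = X $$ (m,m)"
  proof -
    have "upper_triangular (mat_delete X 0 0)"
      using X by (auto simp: upper_triangular_def mat_delete_def unit m_def)
    hence "det (mat_delete X 0 0) = prod_list (diag_mat (mat_delete X 0 0))"
      using X by (intro det_upper_triangular) auto
    also have "diag_mat (mat_delete X 0 0) = replicate n 1 @ [X $$ (m,m)]"
      using X by (auto simp: diag_mat_def mat_delete_def unit m_def nth_append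
          intro!: nth_equalityI)
    finally show ?thesis by simp
  qed
  have minor_m: "det (mat_delete X m 0) = (-1)^n * X $$ (0,m)"
  proof -
    define Z where "Z = mat_delete X m 0"
    have Z: "Z \<in> carrier_mat m m" using mat_delete_carrier[OF X] by (simp add: Z_def m_def)
    have Z_entry: "Z $$ (i,j) = X $$ (i, Suc j)" if "i < m" "j < m" for i j
      using that X by (simp add: Z_def mat_delete_def m_def)
    have "mat_delete Z 0 n = 1\<^sub>m n"
      using Z by (intro eq_matI) (auto simp: mat_delete_def Z_entry unit m_def)
    moreover have "det Z = Z $$ (0,n) * cofactor Z 0 n"
      by (rule det_eq_entry_mult_cofactor_row[OF Z]) (auto simp: Z_entry unit m_def)
    ultimately have "det Z = (-1)^n * X $$ (0,m)"
      by (simp add: cofactor_def Z_entry m_def mult.commute)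
    thus ?thesis by (simp add: Z_def)
  qed
  have other_minors: "det (mat_delete X i 0) = 0" if "0 < i" "i < m" for i
  proof -
    obtain i' where i': "i = Suc i'" using \<open>0 < i\<close> gr0_implies_Suc by blast
    show ?thesis
      by (rule det_zero_col[of _ "Suc n" i']) (use X that i' in \<open>auto simp: mat_delete_def unit m_def\<close>)
  qed
  have "det X = (\<Sum>i<Suc m. X $$ (i,0) * cofactor X i 0)"
    using laplace_expansion_column[OF X] by (simp add: m_def)
  also have "\<dots> = (\<Sum>i\<in>{0,m}. X $$ (i,0) * cofactor X i 0)"
    using other_minors by (intro sum.mono_neutral_right) (auto simp: cofactor_def)
  also have "\<dots> = X $$ (0,0) * X $$ (m,m) - X $$ (m,0) * X $$ (0,m)"
    using minor_0 minor_m by (simp add: cofactor_def m_def)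
  finally show ?thesis by (simp add: m_def)
qed

lemma index_mult_identity_but_cols:
  fixes A C :: "'a :: comm_ring_1 mat" and J :: "nat set"
  assumes A: "A \<in> carrier_mat N N" and C: "C \<in> carrier_mat N N" and "i < N" "j < N"
  defines "X \<equiv> mat N N (\<lambda>(i,j). if j \<in> J then C $$ (i,j) else (if i = j then 1 else 0))"
  shows "(A * X) $$ (i,j) = (if j \<in> J then (A * C) $$ (i,j) else A $$ (i,j))"
proof -
  have "(A * X) $$ (i,j) = (\<Sum>k<N. A $$ (i,k) * X $$ (k,j))"
    using A \<open>i < N\<close> \<open>j < N\<close> by (simp add: X_def scalar_prod_def lessThan_atLeast0)
  also have "\<dots> = (if j \<in> J then (\<Sum>k<N. A $$ (i,k) * C $$ (k,j))
      else (\<Sum>k<N. A $$ (i,k) * (if k = j then 1 else 0)))"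
    using \<open>j < N\<close> by (auto simp: X_def intro!: sum.cong)
  also have "\<dots> = (if j \<in> J then (A * C) $$ (i,j) else A $$ (i,j))"
    using A C \<open>i < N\<close> \<open>j < N\<close> by (simp add: scalar_prod_def lessThan_atLeast0 if_distrib cong: if_cong)
  finally show ?thesis .
qed

lemma desnanot_jacobi_of_det_nonzero:
  fixes A :: "'a :: idom mat"
  assumes A: "A \<in> carrier_mat (Suc (Suc n)) (Suc (Suc n))" and "det A \<noteq> 0"
  shows "det A * det (mat_delete (mat_delete A 0 0) n n)
       = det (mat_delete A 0 0) * det (mat_delete A (Suc n) (Suc n))
         - det (mat_delete A 0 (Suc n)) * det (mat_delete A (Suc n) 0)"
proof -
  define N where "N = Suc (Suc n)"
  define m where "m = Suc n"
  define C where "C = adj_mat A"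
  have A_N: "A \<in> carrier_mat N N" using A by (simp add: N_def)
  have C: "C \<in> carrier_mat N N" and AC: "A * C = det A \<cdot>\<^sub>m 1\<^sub>m N"
    using adj_mat[OF A_N] by (simp_all add: C_def)
  have C_entry: "C $$ (i,j) = cofactor A j i" if "i < N" "j < N" for i j
    using that A_N by (simp add: C_def adj_mat_def)
  \<comment> \<open>\<open>A * X\<close> has columns \<open>det A \<cdot> e\<^sub>0\<close>, \<open>det A \<cdot> e\<^sub>m\<close> and otherwise those of \<open>A\<close>\<close>
  define X where "X = mat N N (\<lambda>(i,j). if j \<in> {0, m} then C $$ (i,j) else (if i = j then 1 else 0))"
  have X: "X \<in> carrier_mat N N" by (simp add: X_def)
  have AX_entry: "(A * X) $$ (i,j) = (if j \<in> {0, m} then (A * C) $$ (i,j) else A $$ (i,j))"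
    if "i < N" "j < N" for i j
    unfolding X_def using A_N C that by (rule index_mult_identity_but_cols)
  have AX: "A * X \<in> carrier_mat N N" using A_N X by simp
  have "det A * det X = det (A * X)" using det_mult[OF A_N X] by simp
  also have "\<dots> = det A * det A * det (mat_delete (mat_delete A 0 0) n n)"
  proof -
    have "mat_delete (mat_delete (A * X) 0 0) n n = mat_delete (mat_delete A 0 0) n n"
      using A_N X
      by (intro eq_matI) (auto simp: mat_delete_def AX_entry N_def m_def simp del: index_mult_mat(1))
    moreover have "det (A * X) = (A * X) $$ (0,0) * (A * X) $$ (m,m) * det (mat_delete (mat_delete (A * X) 0 0) n n)"
      using AX unfolding N_def m_def by (intro det_two_unit_cols)
        (auto simp: AX_entry AC N_def m_def simp del: index_mult_mat(1))
    ultimately show ?thesis by (simp add: AX_entry AC N_def m_def del: index_mult_mat(1))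
  qed
  finally have "det X = det A * det (mat_delete (mat_delete A 0 0) n n)"
    using \<open>det A \<noteq> 0\<close> by (simp add: mult.assoc)
  moreover have "det X = C $$ (0,0) * C $$ (m,m) - C $$ (m,0) * C $$ (0,m)"
    using det_identity_but_two_cols[of X n] X by (simp add: X_def N_def m_def)
  moreover have "C $$ (m,0) * C $$ (0,m) = det (mat_delete A 0 m) * det (mat_delete A m 0)"
    using C_entry[of m 0] C_entry[of 0 m] by (simp add: cofactor_def N_def m_def flip: power_add)
  ultimately show ?thesis
    using C_entry[of 0 0] C_entry[of m m] by (simp add: cofactor_def N_def m_def flip: power_add)
qed

lemma map_mat_mat_delete: "map_mat f (mat_delete A i j) = mat_delete (map_mat f A) i j"
  by (rule eq_matI) (auto simp: mat_delete_def)

text \<open>The nonzero-determinant hypothesis is removed by applying the special case to the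
  characteristic matrix \<open>x I + A\<close>, whose determinant is a monic polynomial, and evaluating at \<open>x = 0\<close>.\<close>
lemma desnanot_jacobi:
  fixes A :: "'a :: idom mat"
  assumes A: "A \<in> carrier_mat (Suc (Suc n)) (Suc (Suc n))"
  shows "det A * det (mat_delete (mat_delete A 0 0) n n)
       = det (mat_delete A 0 0) * det (mat_delete A (Suc n) (Suc n))
         - det (mat_delete A 0 (Suc n)) * det (mat_delete A (Suc n) 0)"
proof -
  define P where "P = char_poly_matrix (- A)"
  have minus_A: "- A \<in> carrier_mat (Suc (Suc n)) (Suc (Suc n))" using A by simp
  hence P: "P \<in> carrier_mat (Suc (Suc n)) (Suc (Suc n))" by (simp add: P_def)
  have "det P \<noteq> 0"
    using degree_monic_char_poly[OF minus_A] unfolding P_def char_poly_def[symmetric] by auto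
  have eval_hom: "comm_ring_hom (\<lambda>p::'a poly. poly p 0)" by unfold_locales auto
  have eval_P: "map_mat (\<lambda>p. poly p 0) P = A"
    using A by (auto simp: P_def char_poly_matrix_def intro!: eq_matI)
  from arg_cong[OF desnanot_jacobi_of_det_nonzero[OF P \<open>det P \<noteq> 0\<close>], of "\<lambda>p. poly p 0"]
  show ?thesis
    by (simp add: comm_ring_hom.hom_det[OF eval_hom, symmetric] map_mat_mat_delete eval_P)
qed

section \<open>Hankel determinants\<close>

definition hankel0_mat :: "(nat \<Rightarrow> real) \<Rightarrow> nat \<Rightarrow> real mat" where
  "hankel0_mat s n = mat (Suc n) (Suc n) (\<lambda>(i,j). s (i + j))"

definition hankel1_mat :: "(nat \<Rightarrow> real) \<Rightarrow> nat \<Rightarrow> real mat" where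
  "hankel1_mat s n = mat n n (\<lambda>(i,j). s (i + j + 1))"

definition hankelm1_mat :: "(nat \<Rightarrow> real) \<Rightarrow> nat \<Rightarrow> real mat" where
  "hankelm1_mat s n = mat (Suc n) (Suc n) (\<lambda>(i,j). if i + j = 0 then 0 else s (i + j - 1))"

lemma Delta0_eq_det: "Delta0 s (int n) = det (hankel0_mat s n)"
  by (simp add: Delta0_def hankel0_mat_def)

lemma Delta0_0: "Delta0 s 0 = s 0"
  using Delta0_eq_det[of s 0] det_single[of "hankel0_mat s 0"] by (simp add: hankel0_mat_def)

lemma Delta1_eq_det: "Delta1 s n = det (hankel1_mat s n)"
  by (simp add: Delta1_def hankel1_mat_def)

lemma Deltam1_eq_det: "Deltam1 s n = det (hankelm1_mat s n)"
proof (cases n)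
  case 0
  thus ?thesis using det_single[of "hankelm1_mat s 0"] by (simp add: Deltam1_def hankelm1_mat_def)
qed (simp add: Deltam1_def hankelm1_mat_def)

lemma hankel_desnanot_jacobi:
  "Deltam1 s (Suc n) * Delta1 s n = Delta1 s (Suc n) * Deltam1 s n - (Delta0 s (int n))\<^sup>2"
proof -
  have "hankelm1_mat s (Suc n) \<in> carrier_mat (Suc (Suc n)) (Suc (Suc n))"
    by (simp add: hankelm1_mat_def)
  note desnanot_jacobi[OF this]
  moreover have "mat_delete (hankelm1_mat s (Suc n)) 0 0 = hankel1_mat s (Suc n)"
    and "mat_delete (hankel1_mat s (Suc n)) n n = hankel1_mat s n"
    and "mat_delete (hankelm1_mat s (Suc n)) (Suc n) (Suc n) = hankelm1_mat s n"
    and "mat_delete (hankelm1_mat s (Suc n)) 0 (Suc n) = hankel0_mat s n"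
    and "mat_delete (hankelm1_mat s (Suc n)) (Suc n) 0 = hankel0_mat s n"
    by (auto simp: mat_delete_def hankelm1_mat_def hankel1_mat_def hankel0_mat_def intro!: eq_matI)
  ultimately show ?thesis
    by (simp add: Deltam1_eq_det Delta1_eq_det Delta0_eq_det power2_eq_square)
qed

lemma Delta0_pos: "strictly_positive s \<Longrightarrow> Delta0 s (int n) > 0"
  by (simp add: strictly_positive_def)

lemma Delta0_pred_pos:
  assumes "strictly_positive s" shows "Delta0 s (int n - 1) > 0"
proof (cases n)
  case 0 thus ?thesis by (simp add: Delta0_def)
next
  case (Suc m)
  thus ?thesis using Delta0_pos[OF assms, of m] by simp
qed

lemma Delta1_nonzero_or_Suc:
  assumes "strictly_positive s" shows "Delta1 s n \<noteq> 0 \<or> Delta1 s (Suc n) \<noteq> 0"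
  using hankel_desnanot_jacobi[of s n] Delta0_pos[OF assms, of n] by auto

section \<open>The indices \<open>k(j)\<close>\<close>

definition Delta1_nonzero_count :: "(nat \<Rightarrow> real) \<Rightarrow> nat \<Rightarrow> nat" where
  "Delta1_nonzero_count s k = card {i. i < k \<and> Delta1 s i \<noteq> 0}"

lemma kidx_eq_Greatest: "kidx s j = (GREATEST k. Delta1_nonzero_count s k = j)"
  by (simp add: kidx_def Delta1_nonzero_count_def)

lemma Delta1_nonzero_count_0 [simp]: "Delta1_nonzero_count s 0 = 0"
  by (simp add: Delta1_nonzero_count_def)

lemma Delta1_nonzero_count_Suc:
  "Delta1_nonzero_count s (Suc k) = Delta1_nonzero_count s k + (if Delta1 s k \<noteq> 0 then 1 else 0)"
proof -
  have "{i. i < Suc k \<and> Delta1 s i \<noteq> 0}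
      = {i. i < k \<and> Delta1 s i \<noteq> 0} \<union> (if Delta1 s k \<noteq> 0 then {k} else {})"
    by (auto simp: less_Suc_eq)
  thus ?thesis by (simp add: Delta1_nonzero_count_def)
qed

lemma Delta1_nonzero_count_mono: "k \<le> k' \<Longrightarrow> Delta1_nonzero_count s k \<le> Delta1_nonzero_count s k'"
  unfolding Delta1_nonzero_count_def by (rule card_mono) auto

lemma Delta1_nonzero_count_double:
  assumes "strictly_positive s" shows "k \<le> Delta1_nonzero_count s (2 * k)"
proof (induction k)
  case (Suc k)
  thus ?case using Delta1_nonzero_or_Suc[OF assms, of "2 * k"]
    by (auto simp: Delta1_nonzero_count_Suc)
qed simp

lemma Delta1_nonzero_count_surj:
  assumes "strictly_positive s" shows "\<exists>k. Delta1_nonzero_count s k = j"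
proof -
  define k where "k = (LEAST k. j \<le> Delta1_nonzero_count s k)"
  have j_le: "j \<le> Delta1_nonzero_count s k"
    unfolding k_def by (rule LeastI, rule Delta1_nonzero_count_double[OF assms])
  show ?thesis
  proof (cases k)
    case 0 thus ?thesis using j_le by (metis Delta1_nonzero_count_0 le_zero_eq)
  next
    case (Suc k')
    have "\<not> j \<le> Delta1_nonzero_count s k'" using Suc k_def not_less_Least by (metis lessI)
    hence "Delta1_nonzero_count s k = j"
      using j_le Suc by (auto simp: Delta1_nonzero_count_Suc split: if_splits)
    thus ?thesis by blast
  qed
qed

lemma kidx_greatest:
  assumes "strictly_positive s"
  shows "Delta1_nonzero_count s (kidx s j) = j"
    and "Delta1_nonzero_count s k = j \<Longrightarrow> k \<le> kidx s j"
proof -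
  have bound: "k \<le> 2 * j + 1" if "Delta1_nonzero_count s k = j" for k
  proof (rule ccontr)
    assume "\<not> k \<le> 2 * j + 1"
    hence "Delta1_nonzero_count s (2 * Suc j) \<le> Delta1_nonzero_count s k"
      by (intro Delta1_nonzero_count_mono) simp
    with Delta1_nonzero_count_double[OF assms, of "Suc j"] that show False by simp
  qed
  obtain k0 where "Delta1_nonzero_count s k0 = j" using Delta1_nonzero_count_surj[OF assms] by blast
  thus "Delta1_nonzero_count s (kidx s j) = j"
    unfolding kidx_eq_Greatest by (rule GreatestI_nat[where b = "2 * j + 1"]) (use bound in auto)
  show "Delta1_nonzero_count s k = j \<Longrightarrow> k \<le> kidx s j"
    unfolding kidx_eq_Greatest by (rule Greatest_le_nat[where b = "2 * j + 1"]) (use bound in auto)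
qed

lemma kidx_eqI:
  assumes "Delta1_nonzero_count s k = j" and "Delta1 s k \<noteq> 0"
  shows "kidx s j = k"
  unfolding kidx_eq_Greatest
proof (rule Greatest_equality)
  fix k' assume "Delta1_nonzero_count s k' = j"
  moreover have "Delta1_nonzero_count s (Suc k) = Suc j"
    using assms by (simp add: Delta1_nonzero_count_Suc)
  ultimately show "k' \<le> k" using Delta1_nonzero_count_mono[of "Suc k" k' s] by fastforce
qed (fact assms(1))

lemma Delta1_kidx_nonzero:
  assumes "strictly_positive s" shows "Delta1 s (kidx s j) \<noteq> 0"
proof
  assume "Delta1 s (kidx s j) = 0"
  hence "Delta1_nonzero_count s (Suc (kidx s j)) = j"
    using kidx_greatest(1)[OF assms] by (simp add: Delta1_nonzero_count_Suc)
  thus False using kidx_greatest(2)[OF assms] by fastforce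
qed

lemma kidx_Suc:
  assumes "strictly_positive s"
  shows "kidx s (Suc j) = (if Delta1 s (Suc (kidx s j)) \<noteq> 0 then Suc (kidx s j) else Suc (Suc (kidx s j)))"
proof -
  define k where "k = kidx s j"
  have count_Suc: "Delta1_nonzero_count s (Suc k) = Suc j"
    using kidx_greatest(1)[OF assms] Delta1_kidx_nonzero[OF assms]
    by (simp add: k_def Delta1_nonzero_count_Suc)
  show ?thesis
  proof (cases "Delta1 s (Suc k) \<noteq> 0")
    case True
    thus ?thesis using kidx_eqI[OF count_Suc] by (simp add: k_def)
  next
    case False
    have "Delta1_nonzero_count s (Suc (Suc k)) = Suc j"
      using count_Suc False by (simp add: Delta1_nonzero_count_Suc)
    moreover have "Delta1 s (Suc (Suc k)) \<noteq> 0"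
      using Delta1_nonzero_or_Suc[OF assms, of "Suc k"] False by simp
    ultimately have "kidx s (Suc j) = Suc (Suc k)" by (rule kidx_eqI)
    thus ?thesis using False by (simp add: k_def)
  qed
qed

section \<open>The polynomials at the origin\<close>

definition hankel_last_row_mat :: "(nat \<Rightarrow> 'a) \<Rightarrow> nat \<Rightarrow> (nat \<Rightarrow> 'a) \<Rightarrow> 'a mat" where
  "hankel_last_row_mat s n v = mat (Suc n) (Suc n) (\<lambda>(i,j). if i < n then s (i + j) else v j)"

lemma det_hankel_last_row_mat:
  fixes s v w :: "nat \<Rightarrow> 'a :: comm_ring_1"
  shows "det (hankel_last_row_mat s n v) = (\<Sum>j\<le>n. v j * cofactor (hankel_last_row_mat s n w) n j)"
proof -
  have "det (hankel_last_row_mat s n v)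
      = (\<Sum>j<Suc n. v j * cofactor (hankel_last_row_mat s n v) n j)"
    by (subst laplace_expansion_row[of _ "Suc n" n]) (auto simp: hankel_last_row_mat_def)
  also have "\<dots> = (\<Sum>j\<le>n. v j * cofactor (hankel_last_row_mat s n w) n j)"
    unfolding lessThan_Suc_atMost cofactor_def
    by (intro sum.cong refl arg_cong2[where f = "(*)"] arg_cong[where f = det] eq_matI)
      (auto simp: mat_delete_def hankel_last_row_mat_def)
  finally show ?thesis .
qed

lemma map_mat_hankel_last_row_mat:
  "map_mat f (hankel_last_row_mat s n v) = hankel_last_row_mat (f \<circ> s) n (f \<circ> v)"
  by (auto simp: hankel_last_row_mat_def intro!: eq_matI)

lemma (in comm_ring_hom) hom_cofactor: "hom (cofactor A i j) = cofactor (map_mat hom A) i j"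
  by (simp add: cofactor_def hom_distribs flip: map_mat_mat_delete)

abbreviation Ppoly_coeff :: "(nat \<Rightarrow> real) \<Rightarrow> nat \<Rightarrow> nat \<Rightarrow> real" where
  "Ppoly_coeff s n j \<equiv> cofactor (hankel_last_row_mat s n (\<lambda>_. 0)) n j"

definition Ppoly_normalizer :: "(nat \<Rightarrow> real) \<Rightarrow> nat \<Rightarrow> real" where
  "Ppoly_normalizer s n = 1 / sqrt (Delta0 s (int n - 1) * Delta0 s (int n))"

lemma Ppoly_eq_sum_monom:
  "Ppoly s n = Polynomial.smult (Ppoly_normalizer s n) (\<Sum>j\<le>n. monom (Ppoly_coeff s n j) j)"
proof -
  have const_hom: "comm_ring_hom (\<lambda>x::real. [:x:])" by unfold_locales auto
  define M where "M = hankel_last_row_mat (\<lambda>k. [:s k:]) n (monom 1)"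
  have "det M = (\<Sum>j\<le>n. monom 1 j * cofactor (hankel_last_row_mat (\<lambda>k. [:s k:]) n (\<lambda>_. 0)) n j)"
    unfolding M_def by (rule det_hankel_last_row_mat)
  also have "\<dots> = (\<Sum>j\<le>n. monom (Ppoly_coeff s n j) j)"
    using comm_ring_hom.hom_cofactor[OF const_hom, of "hankel_last_row_mat s n (\<lambda>_. 0)" n, symmetric]
    by (simp add: map_mat_hankel_last_row_mat o_def mult_pCons_right smult_monom)
  finally have det_M: "det M = (\<Sum>j\<le>n. monom (Ppoly_coeff s n j) j)" .
  show ?thesis
  proof (cases n)
    case 0
    have "det M = 1" using det_single[of M] by (simp add: M_def 0 hankel_last_row_mat_def)
    hence "Ppoly_coeff s 0 0 = 1" using det_M 0 by (simp add: monom_0 one_pCons)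
    moreover have "Delta0 s (-1) = 1" by (simp add: Delta0_def)
    ultimately show ?thesis using 0 by (simp add: Ppoly_def Ppoly_normalizer_def Delta0_0 monom_0)
  next
    case (Suc m)
    have "Ppoly s n = Polynomial.smult (Ppoly_normalizer s n) (det M)"
      using Suc by (simp add: Ppoly_def Ppoly_normalizer_def M_def hankel_last_row_mat_def)
    thus ?thesis by (simp add: det_M)
  qed
qed

lemma coeff_Ppoly:
  "coeff (Ppoly s n) j = (if j \<le> n then Ppoly_normalizer s n * Ppoly_coeff s n j else 0)"
  by (simp add: Ppoly_eq_sum_monom coeff_sum coeff_monom)

lemma degree_Ppoly: "degree (Ppoly s n) \<le> n"
  by (rule degree_le) (simp add: coeff_Ppoly)

lemma Ppoly_coeff_0: "Ppoly_coeff s n 0 = (-1)^n * Delta1 s n"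
proof -
  have "mat_delete (hankel_last_row_mat s n (\<lambda>_. 0)) n 0 = hankel1_mat s n"
    by (auto simp: mat_delete_def hankel_last_row_mat_def hankel1_mat_def intro!: eq_matI)
  thus ?thesis by (simp add: cofactor_def Delta1_eq_det)
qed

text \<open>Moving the last row (0, s_0, ..., s_{n-1}) to the top gives the Hankel matrix of Delta_{-1,n}.\<close>
lemma det_hankel_last_row_mat_shift:
  "det (hankel_last_row_mat s n (\<lambda>j. if j = 0 then 0 else s (j - 1))) = (-1)^n * Deltam1 s n"
proof -
  let ?B = "hankel_last_row_mat s n (\<lambda>j. if j = 0 then 0 else s (j - 1))"
  have B: "?B \<in> carrier_mat (Suc n) (Suc n)" by (simp add: hankel_last_row_mat_def)
  have "swap_row_to_front ?B n = hankelm1_mat s n"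
    unfolding swap_row_to_front_result[OF B lessI]
    by (auto simp: hankel_last_row_mat_def hankelm1_mat_def intro!: eq_matI)
  hence "Deltam1 s n = (-1)^n * det ?B"
    using swap_row_to_front_det[OF B, of n] by (simp add: Deltam1_eq_det)
  thus ?thesis by simp
qed

lemma Pfun_at_0: "Pfun s n 0 = Ppoly_normalizer s n * (-1)^n * Delta1 s n"
  by (simp add: Pfun_def poly_0_coeff_0 coeff_Ppoly Ppoly_coeff_0)

lemma integral_poly_moments:
  assumes "moment_measure s \<rho>" and "degree p \<le> N"
  shows "(\<integral>x. poly p x \<partial>\<rho>) = (\<Sum>i\<le>N. coeff p i * s i)"
proof -
  have "poly p x = (\<Sum>i\<le>N. coeff p i * x ^ i)" for x
    using arg_cong[OF poly_as_sum_of_monoms'[OF assms(2)], of "\<lambda>q. poly q x"]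
    by (simp add: poly_sum poly_monom)
  hence "(\<integral>x. poly p x \<partial>\<rho>) = (\<integral>x. (\<Sum>i\<le>N. coeff p i * x ^ i) \<partial>\<rho>)"
    by simp
  also have "\<dots> = (\<Sum>i\<le>N. \<integral>x. coeff p i * x ^ i \<partial>\<rho>)"
    by (rule Bochner_Integration.integral_sum) (use assms(1) in \<open>auto simp: moment_measure_def\<close>)
  also have "\<dots> = (\<Sum>i\<le>N. coeff p i * s i)"
    using assms(1) by (simp add: moment_measure_def)
  finally show ?thesis .
qed

lemma integral_divdiff_at_0:
  assumes "moment_measure s \<rho>" and "degree p \<le> Suc N"
  shows "(\<integral>x. divdiff p 0 x \<partial>\<rho>) = (\<Sum>i\<le>N. coeff p (Suc i) * s i)"
proof -
  obtain a q where p: "p = pCons a q" by (cases p)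
  have "divdiff p 0 = poly q" by (auto simp: divdiff_def p pderiv_pCons)
  moreover have "degree q \<le> N" using assms(2) p by (cases "q = 0") auto
  ultimately show ?thesis using integral_poly_moments[OF assms(1)] by (simp add: p)
qed

lemma Qfun_at_0:
  assumes "moment_measure s \<rho>"
  shows "Qfun s \<rho> n 0 = Ppoly_normalizer s n * (-1)^n * Deltam1 s n"
proof (cases n)
  case 0 thus ?thesis by (simp add: Qfun_def Deltam1_def)
next
  case (Suc m)
  have "Qfun s \<rho> n 0 = (\<Sum>i\<le>m. coeff (Ppoly s n) (Suc i) * s i)"
    using Suc integral_divdiff_at_0[OF assms, of "Ppoly s n" m] degree_Ppoly[of s n]
    by (simp add: Qfun_def)
  also have "\<dots> = Ppoly_normalizer s n
      * (\<Sum>j\<le>n. (if j = 0 then 0 else s (j - 1)) * Ppoly_coeff s n j)"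
    unfolding Suc sum.atMost_Suc_shift by (simp add: coeff_Ppoly sum_distrib_left mult_ac)
  also have "\<dots> = Ppoly_normalizer s n * (-1)^n * Deltam1 s n"
    by (simp add: det_hankel_last_row_mat_shift flip: det_hankel_last_row_mat)
  finally show ?thesis .
qed

lemma Ppoly_normalizer_sq:
  assumes "strictly_positive s"
  shows "(Ppoly_normalizer s n)\<^sup>2 = 1 / (Delta0 s (int n - 1) * Delta0 s (int n))"
  using Delta0_pred_pos[OF assms, of n] Delta0_pos[OF assms, of n]
  by (simp add: Ppoly_normalizer_def power_divide)

lemma Ppoly_normalizer_pos: "strictly_positive s \<Longrightarrow> Ppoly_normalizer s n > 0"
  using Delta0_pred_pos Delta0_pos by (simp add: Ppoly_normalizer_def)

lemma Pfun_at_0_sq: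
  assumes "strictly_positive s"
  shows "(Pfun s n 0)\<^sup>2 = (Delta1 s n)\<^sup>2 / (Delta0 s (int n - 1) * Delta0 s (int n))"
  by (simp add: Pfun_at_0 power_mult_distrib Ppoly_normalizer_sq[OF assms] flip: power_mult)

lemma Qfun_at_0_sq:
  assumes "strictly_positive s" and "moment_measure s \<rho>"
  shows "(Qfun s \<rho> n 0)\<^sup>2 = (Deltam1 s n)\<^sup>2 / (Delta0 s (int n - 1) * Delta0 s (int n))"
  by (simp add: Qfun_at_0[OF assms(2)] power_mult_distrib Ppoly_normalizer_sq[OF assms(1)]
      flip: power_mult)

lemma Qfun_div_Pfun_at_0:
  assumes "strictly_positive s" and "moment_measure s \<rho>"
  shows "Qfun s \<rho> n 0 / Pfun s n 0 = Deltam1 s n / Delta1 s n"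
  using Ppoly_normalizer_pos[OF assms(1), of n]
  by (simp add: Qfun_at_0[OF assms(2)] Pfun_at_0)

lemma omegacoef_eq:
  assumes "strictly_positive s"
  shows "omegacoef s j = Deltam1 s (kidx s j) / Delta1 s (kidx s j)
    - Deltam1 s (kidx s (Suc j)) / Delta1 s (kidx s (Suc j))"
proof (cases "Delta1 s (Suc (kidx s j)) \<noteq> 0")
  case True
  then show ?thesis
    using hankel_desnanot_jacobi[of s "kidx s j"] Delta1_kidx_nonzero[OF assms, of j]
    by (simp add: omegacoef_def kidx_Suc[OF assms] Let_def field_simps)
qed (simp add: omegacoef_def kidx_Suc[OF assms] Let_def)

theorem corollary5p4:
  fixes s :: "nat \<Rightarrow> real" and \<rho> :: "real measure" and j :: nat
  assumes "strictly_positive s"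
    and "moment_measure s \<rho>"
  shows "lcoef s j = \<bar>Pfun s (kidx s j) 0\<bar>\<^sup>2
    \<and> omegacoef s j = Qfun s \<rho> (kidx s j) 0 / Pfun s (kidx s j) 0
                      - Qfun s \<rho> (kidx s (Suc j)) 0 / Pfun s (kidx s (Suc j)) 0
    \<and> (kidx s (Suc j) - kidx s j = 1 \<longrightarrow> upsiloncoef s j = 0)
    \<and> (kidx s (Suc j) - kidx s j = 2 \<longrightarrow> upsiloncoef s j = \<bar>Qfun s \<rho> (kidx s j + 1) 0\<bar>\<^sup>2)"
proof (intro conjI impI)
  show "lcoef s j = \<bar>Pfun s (kidx s j) 0\<bar>\<^sup>2"
    by (simp add: lcoef_def Pfun_at_0_sq[OF assms(1)])
  show "omegacoef s j = Qfun s \<rho> (kidx s j) 0 / Pfun s (kidx s j) 0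
      - Qfun s \<rho> (kidx s (Suc j)) 0 / Pfun s (kidx s (Suc j)) 0"
    by (simp add: omegacoef_eq[OF assms(1)] Qfun_div_Pfun_at_0[OF assms])
  show "upsiloncoef s j = 0" if "kidx s (Suc j) - kidx s j = 1"
    using that by (simp add: upsiloncoef_def)
  show "upsiloncoef s j = \<bar>Qfun s \<rho> (kidx s j + 1) 0\<bar>\<^sup>2" if "kidx s (Suc j) - kidx s j = 2"
    using that by (simp add: upsiloncoef_def Let_def Qfun_at_0_sq[OF assms] add.commute)
qed

end
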